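(* In the setting of the context, fix $\varepsilon\in(0,1]$ and $x\in\mathbb{X}$, let $P_x(s)=|\psi_x^+(s,\varepsilon)\rangle\langle\psi_x^+(s,\varepsilon)|$, $N_x=\|\,|\Psi_x^+(s,\varepsilon)\rangle\|$ (independent of $s$), and $$X_x(s)=\frac{\pi}{2N_x}\,|\Psi_x^-(s,\varepsilon)\rangle\langle\psi_x^+(s,\varepsilon)|,\qquad s\in[0,1].$$ Then $[H_x(s,\varepsilon),X_x(s)]=H_x(s,\varepsilon)X_x(s)=\dot P_x(s)P_x(s)$ for all $s\in[0,1]$ (dot denotes $\partial_s$). If moreover $W\ge\varepsilon/2$, then for all $s\in[0,1]$ $$\|X_x(s)\|\le\frac{\pi\sqrt5}{2}\,\frac{W}{\varepsilon},\qquad \|\dot X_x(s)P_x(s)\|\le\frac{\pi^2}{\sqrt2}\,\frac{W}{\varepsilon},$$ and in particular $2\|X_x(s)\|+\|\dot X_x(s)P_x(s)\|\le 15\,W/\varepsilon$.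
   Context: Setting (construction of AdiaConvert). Let $\Sigma$ be finite, $\bar 0\notin\Sigma$, $n\ge1$, $\mathbb{X}\subseteq\Sigma^n$, and $\rho,\sigma$ the Gram matrices of unit vectors $|\rho_x\rangle,|\sigma_x\rangle\in\mathbb{C}^d$ ($x\in\mathbb X$). For $j\in[n]$, $(\Delta_j)_{x,y}=1-\delta_{x_j,y_j}$. Let $W=\mathrm{Adv}^\star(\rho,\sigma)$, where $\mathrm{Adv}^\star(\rho,\sigma)=\max_\Gamma\|\Gamma\circ(\rho-\sigma)\|$ over Hermitian $\Gamma$ with $\|\Gamma\circ\Delta_j\|\le1$ for all $j$ ($\circ$ = entrywise product); assume $W>0$. Fix $m$ and vectors $u_{x,i},v_{x,i}\in\mathbb{C}^m$ ($x\in\mathbb X$, $i\in[n]$) such that $\rho_{x,y}-\sigma_{x,y}=\sum_i(\Delta_i)_{x,y}\langle u_{x,i}|v_{y,i}\rangle$ for all $x,y$, and $\sum_i\|u_{x,i}\|^2\le W$, $\sum_i\|v_{x,i}\|^2\le W$ for all $x$. Hilbert space: $\mathcal H=\mathcal H_{\mathcal O}\oplus(\mathcal H_{\mathcal Q}\otimes\mathcal H_{\mathcal W})$ (orthogonal direct sum) with $\mathcal H_{\mathcal O}=\mathbb{C}^2\otimes\mathbb{C}^d$, $\mathcal H_{\mathcal Q}=\mathbb{C}^n\otimes\mathbb{C}^{\Sigma\cup\{\bar0\}}$ (orthonormal basis $|i,y\rangle$), $\mathcal H_{\mathcal W}=\mathbb{C}^m$. For $y\in\Sigma$, $|y^\pm\rangle=\frac1{\sqrt2}(|\bar0\rangle\pm|y\rangle)$.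 Let $\theta(s)=\frac{\pi}{2}s$, $\xi(s)=2\cos\theta(s)\sin\theta(s)$, $|k_x^+(s)\rangle=\cos\theta(s)|0,\rho_x\rangle+\sin\theta(s)|1,\sigma_x\rangle$, $|k_x^-(s)\rangle=-\sin\theta(s)|0,\rho_x\rangle+\cos\theta(s)|1,\sigma_x\rangle$ (in $\mathcal H_{\mathcal O}$), $|\Psi_x^+(s,\varepsilon)\rangle=|k_x^+(s)\rangle+\frac{\varepsilon}{\sqrt W}\sum_i|i,x_i^+\rangle|u_{x,i}\rangle$, $|\Psi_x^-(s,\varepsilon)\rangle=|k_x^-(s)\rangle+\xi(s)\frac{\sqrt W}{\varepsilon}\sum_i|i,x_i^-\rangle|v_{x,i}\rangle$, $|\psi_x^+(s,\varepsilon)\rangle=|\Psi_x^+(s,\varepsilon)\rangle/\|\,|\Psi_x^+(s,\varepsilon)\rangle\|$. $\Lambda(s,\varepsilon)$ is the orthogonal projection onto $\mathrm{span}\{|\Psi_x^-(s,\varepsilon)\rangle: x\in\mathbb X\}$; $\Pi_x=\sum_i|i,x_i^-\rangle\langle i,x_i^-|\otimes I_{\mathcal W}$, acting as $0$ on $\mathcal H_{\mathcal O}$; $H_x(s,\varepsilon)=\Lambda(s,\varepsilon)-\Pi_x$. $\|\cdot\|$ on operators is the operator norm. *)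

theory Defs
  imports "HOL-Analysis.Analysis"
begin

text \<open>Finite-dimensional complex Hilbert spaces are modelled as complex^'t for a finite
  index type 't (Euclidean L2 norm); operators as matrices complex^'t^'t acting by (*v).\<close>

definition cinner :: "complex^'t \<Rightarrow> complex^'t \<Rightarrow> complex" where
  "cinner a b = (\<Sum>i\<in>UNIV. cnj (a$i) * b$i)"

definition opnorm :: "complex^'t^'s \<Rightarrow> real" where
  "opnorm M = onorm (\<lambda>v. M *v v)"

definition outer :: "complex^'t \<Rightarrow> complex^'s \<Rightarrow> complex^'s^'t" where
  "outer a b = (\<chi> i j. a$i * cnj (b$j))"

definition hadamard :: "complex^'t^'s \<Rightarrow> complex^'t^'s \<Rightarrow> complex^'t^'s" where
  "hadamard A B = (\<chi> i j. A$i$j * B$i$j)"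

definition hermitian_mat :: "complex^'t^'t \<Rightarrow> bool" where
  "hermitian_mat A \<longleftrightarrow> (\<forall>i j. A$i$j = cnj (A$j$i))"

definition ket :: "'t \<Rightarrow> complex^'t" where
  "ket j = (\<chi> i. if i = j then 1 else 0)"

definition orth_proj :: "(complex^'t) set \<Rightarrow> complex^'t^'t" where
  "orth_proj S = (THE P. \<forall>v. P *v v \<in> vec.span S \<and>
                        (\<forall>w\<in>vec.span S. cinner w (v - P *v v) = 0))"

text \<open>Strings x \<in> \<Sigma>^n are functions 'n \<Rightarrow> 'a. Matrices indexed by \<XX> are matrices over the
  whole (finite) type 'n \<Rightarrow> 'a, with entries outside \<XX> \<times> \<XX> set to 0.\<close>

definition gram :: "('n::finite \<Rightarrow> 'a::finite) set \<Rightarrow> (('n \<Rightarrow> 'a) \<Rightarrow> complex^'d) \<Rightarrow> complex^('n\<Rightarrow>'a)^('n\<Rightarrow>'a)" where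
  "gram XX f = (\<chi> x y. if x \<in> XX \<and> y \<in> XX then cinner (f x) (f y) else 0)"

definition Delta :: "'n \<Rightarrow> complex^('n::finite\<Rightarrow>'a::finite)^('n\<Rightarrow>'a)" where
  "Delta j = (\<chi> x y. if x j = y j then 0 else 1)"

definition adv_star :: "('n::finite \<Rightarrow> 'a::finite) set \<Rightarrow> complex^('n\<Rightarrow>'a)^('n\<Rightarrow>'a) \<Rightarrow> complex^('n\<Rightarrow>'a)^('n\<Rightarrow>'a) \<Rightarrow> real" where
  "adv_star XX rho sigm = Sup {opnorm (hadamard G (rho - sigm)) | G.
      hermitian_mat G \<and> (\<forall>x y. (x \<notin> XX \<or> y \<notin> XX) \<longrightarrow> G$x$y = 0) \<and>
      (\<forall>j. opnorm (hadamard G (Delta j)) \<le> 1)}"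

text \<open>Hilbert space H = H_O \<oplus> (H_Q \<otimes> H_W): index type
  (bool \<times> 'd) + ('n \<times> 'a option \<times> 'm); False/True encode |0>,|1>, None encodes \<bar>0.\<close>

type_synonym ('n,'a,'d,'m) hidx = "(bool \<times> 'd) + ('n \<times> 'a option \<times> 'm)"

definition embO :: "bool \<Rightarrow> complex^'d \<Rightarrow> complex^('n::finite,'a::finite,'d::finite,'m::finite) hidx" where
  "embO b phi = (\<chi> idx. case idx of Inl (c,k) \<Rightarrow> (if c = b then phi$k else 0) | Inr _ \<Rightarrow> 0)"

definition embQW :: "'n \<Rightarrow> complex^('a option) \<Rightarrow> complex^'m \<Rightarrow> complex^('n::finite,'a::finite,'d::finite,'m::finite) hidx" where
  "embQW i a w = (\<chi> idx. case idx of Inl _ \<Rightarrow> 0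
       | Inr (j,z,l) \<Rightarrow> (if j = i then a$z * w$l else 0))"

definition y_plus :: "'a::finite \<Rightarrow> complex^('a option)" where
  "y_plus y = (1 / sqrt 2) *\<^sub>R (ket None + ket (Some y))"

definition y_minus :: "'a::finite \<Rightarrow> complex^('a option)" where
  "y_minus y = (1 / sqrt 2) *\<^sub>R (ket None - ket (Some y))"

definition theta :: "real \<Rightarrow> real" where "theta s = pi / 2 * s"

definition xi :: "real \<Rightarrow> real" where "xi s = 2 * cos (theta s) * sin (theta s)"

definition k_plus :: "(('n\<Rightarrow>'a) \<Rightarrow> complex^'d) \<Rightarrow> (('n\<Rightarrow>'a) \<Rightarrow> complex^'d) \<Rightarrow> real \<Rightarrow> ('n\<Rightarrow>'a)
     \<Rightarrow> complex^('n::finite,'a::finite,'d::finite,'m::finite) hidx" where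
  "k_plus rv sv s x = cos (theta s) *\<^sub>R embO False (rv x) + sin (theta s) *\<^sub>R embO True (sv x)"

definition k_minus :: "(('n\<Rightarrow>'a) \<Rightarrow> complex^'d) \<Rightarrow> (('n\<Rightarrow>'a) \<Rightarrow> complex^'d) \<Rightarrow> real \<Rightarrow> ('n\<Rightarrow>'a)
     \<Rightarrow> complex^('n::finite,'a::finite,'d::finite,'m::finite) hidx" where
  "k_minus rv sv s x = - sin (theta s) *\<^sub>R embO False (rv x) + cos (theta s) *\<^sub>R embO True (sv x)"

definition Psi_plus :: "(('n\<Rightarrow>'a) \<Rightarrow> complex^'d) \<Rightarrow> (('n\<Rightarrow>'a) \<Rightarrow> complex^'d)
     \<Rightarrow> (('n\<Rightarrow>'a) \<Rightarrow> 'n \<Rightarrow> complex^'m) \<Rightarrow> real \<Rightarrow> real \<Rightarrow> real \<Rightarrow> ('n\<Rightarrow>'a)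
     \<Rightarrow> complex^('n::finite,'a::finite,'d::finite,'m::finite) hidx" where
  "Psi_plus rv sv u W s eps x = k_plus rv sv s x
     + (eps / sqrt W) *\<^sub>R (\<Sum>i\<in>UNIV. embQW i (y_plus (x i)) (u x i))"

definition Psi_minus :: "(('n\<Rightarrow>'a) \<Rightarrow> complex^'d) \<Rightarrow> (('n\<Rightarrow>'a) \<Rightarrow> complex^'d)
     \<Rightarrow> (('n\<Rightarrow>'a) \<Rightarrow> 'n \<Rightarrow> complex^'m) \<Rightarrow> real \<Rightarrow> real \<Rightarrow> real \<Rightarrow> ('n\<Rightarrow>'a)
     \<Rightarrow> complex^('n::finite,'a::finite,'d::finite,'m::finite) hidx" where
  "Psi_minus rv sv v W s eps x = k_minus rv sv s x
     + (xi s * sqrt W / eps) *\<^sub>R (\<Sum>i\<in>UNIV. embQW i (y_minus (x i)) (v x i))"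

definition psi_plus where
  "psi_plus rv sv u W s eps x =
     (1 / norm (Psi_plus rv sv u W s eps x)) *\<^sub>R Psi_plus rv sv u W s eps x"

definition Lambda :: "('n \<Rightarrow> 'a) set \<Rightarrow> (('n\<Rightarrow>'a) \<Rightarrow> complex^'d) \<Rightarrow> (('n\<Rightarrow>'a) \<Rightarrow> complex^'d)
     \<Rightarrow> (('n\<Rightarrow>'a) \<Rightarrow> 'n \<Rightarrow> complex^'m) \<Rightarrow> real \<Rightarrow> real \<Rightarrow> real
     \<Rightarrow> complex^('n::finite,'a::finite,'d::finite,'m::finite) hidx^('n,'a,'d,'m) hidx" where
  "Lambda XX rv sv v W s eps = orth_proj ((\<lambda>x. Psi_minus rv sv v W s eps x) ` XX)"

definition Pi_x :: "('n \<Rightarrow> 'a) \<Rightarrow> complex^('n::finite,'a::finite,'d::finite,'m::finite) hidx^('n,'a,'d,'m) hidx" where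
  "Pi_x x = (\<Sum>i\<in>UNIV. \<Sum>l\<in>UNIV.
      outer (embQW i (y_minus (x i)) (ket l)) (embQW i (y_minus (x i)) (ket l)))"

definition H_x where
  "H_x XX rv sv v W s eps x = Lambda XX rv sv v W s eps - Pi_x x"

end

theory Submission
  imports Defs
begin

text \<open>
  Write \<open>N\<close> for the (s-independent) norm of \<open>\<Psi>\<^sup>+\<^sub>x(s)\<close>, \<open>\<psi>(s) = \<Psi>\<^sup>+\<^sub>x(s)/N\<close> and
  \<open>c = \<pi>/(2N)\<close>, so that \<open>P(s) = |\<psi>\<rangle>\<langle>\<psi>|\<close> and \<open>X(s) = |c\<Psi>\<^sup>-\<^sub>x\<rangle>\<langle>\<psi>|\<close> are rank-one operators.
  The argument rests on four facts about the concrete vectors: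
  (a) \<open>\<Psi>\<^sup>+\<^sub>x(s)\<close> is orthogonal to every \<open>\<Psi>\<^sup>-\<^sub>y(s)\<close> (this is where the decomposition of
      \<open>\<rho> - \<sigma>\<close> enters) and to the range of \<open>\<Pi>\<^sub>x\<close>, hence to the range of \<open>H\<^sub>x(s)\<close>;
  (b) \<open>H\<^sub>x(s) \<Psi>\<^sup>-\<^sub>x(s) = k\<^sup>-\<^sub>x(s)\<close>;
  (c) \<open>\<psi>' = c k\<^sup>-\<^sub>x\<close> and \<open>k\<^sup>-\<^sub>x \<perp> \<psi>\<close>;
  (d) explicit formulas for \<open>\<parallel>\<Psi>\<^sup>-\<^sub>x\<parallel>\<close> and \<open>\<parallel>\<partial>\<^sub>s\<Psi>\<^sup>-\<^sub>x\<parallel>\<close>.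
  By (a) \<open>X H = 0\<close>; by (b) \<open>H X = c|k\<^sup>-\<^sub>x\<rangle>\<langle>\<psi>|\<close>; a general rule for differentiating rank-one
  operators gives \<open>P' P = |\<psi>'\<rangle>\<langle>\<psi>|\<close> and \<open>X' P = |c \<partial>\<^sub>s\<Psi>\<^sup>-\<^sub>x\<rangle>\<langle>\<psi>|\<close>, so (c) yields the commutator
  identity (this part is the abstract lemma \<open>rank_one_adiabatic\<close>), and the norm bounds
  follow from (d) and \<open>\<parallel>|a\<rangle>\<langle>b|\<parallel> \<le> \<parallel>a\<parallel>\<parallel>b\<parallel>\<close>.
\<close>

section \<open>The complex inner product on \<open>complex^'t\<close>\<close>

lemma cinner_add_right: "cinner a (b + c) = cinner a b + cinner a c"
  by (simp add: cinner_def sum.distrib distrib_left)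
lemma cinner_add_left: "cinner (a + b) c = cinner a c + cinner b c"
  by (simp add: cinner_def sum.distrib distrib_right)
lemma cinner_diff_right: "cinner a (b - c) = cinner a b - cinner a c"
  by (simp add: cinner_def sum_subtractf right_diff_distrib)
lemma cinner_diff_left: "cinner (a - b) c = cinner a c - cinner b c"
  by (simp add: cinner_def sum_subtractf left_diff_distrib)
lemma cinner_scaleC_right: "cinner a (c *s b) = c * cinner a b"
  by (simp add: cinner_def sum_distrib_left algebra_simps)
lemma cinner_scaleC_left: "cinner (c *s a) b = cnj c * cinner a b"
  by (simp add: cinner_def sum_distrib_left algebra_simps)
lemma cinner_sum_right: "cinner a (\<Sum>i\<in>A. f i) = (\<Sum>i\<in>A. cinner a (f i))"
  by (simp add: cinner_def sum_component sum_distrib_left sum.swap[of _ A])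
lemma cinner_sum_left: "cinner (\<Sum>i\<in>A. f i) b = (\<Sum>i\<in>A. cinner (f i) b)"
  by (simp add: cinner_def sum_component sum_distrib_right sum.swap[of _ A])
lemma cinner_zero_right[simp]: "cinner a 0 = 0"
  by (simp add: cinner_def)
lemma cinner_cnj: "cnj (cinner a b) = cinner b a"
  by (simp add: cinner_def mult.commute)

lemma scaleR_as_scaleC: "r *\<^sub>R (x::complex^'t) = complex_of_real r *s x"
  unfolding vec_eq_iff
  by (simp only: vector_scaleR_component vector_smult_component) (simp add: scaleR_conv_of_real)

lemma cinner_scaleR_right: "cinner a (r *\<^sub>R b) = of_real r * cinner a b"
  by (simp add: scaleR_as_scaleC cinner_scaleC_right)
lemma cinner_scaleR_left: "cinner (r *\<^sub>R a) b = of_real r * cinner a b"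
  by (simp add: scaleR_as_scaleC cinner_scaleC_left)

lemma cinner_self: "cinner a a = of_real ((norm a)\<^sup>2)"
proof -
  have "cinner a a = (\<Sum>i\<in>UNIV. of_real ((cmod (a$i))\<^sup>2))"
    unfolding cinner_def
    by (intro sum.cong refl) (simp add: complex_norm_square mult.commute del: of_real_power)
  also have "\<dots> = of_real ((norm a)\<^sup>2)"
    by (simp add: norm_vec_def L2_set_def sum_nonneg)
  finally show ?thesis .
qed

lemma norm_sq_cinner: "(norm v)\<^sup>2 = Re (cinner v v)"
  by (simp add: cinner_self)

lemma cinner_self_zero: "cinner a a = 0 \<Longrightarrow> a = 0"
  by (simp add: cinner_self)

lemma inner_Re_cinner: "inner a b = Re (cinner a b)"
  by (simp add: inner_vec_def cinner_def inner_complex_def)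

lemma norm_scaleC: "norm (c *s a) = cmod c * norm a"
  by (simp add: norm_vec_def L2_set_right_distrib norm_mult)

text \<open>Cauchy--Schwarz for \<open>cinner\<close>, obtained from the real version after rotating \<open>a\<close> by a phase.\<close>
lemma cinner_Cauchy_Schwarz: "cmod (cinner a b) \<le> norm a * norm b"
proof (cases "cinner a b = 0")
  case True then show ?thesis by simp
next
  case False
  define c where "c = cinner a b"
  define z where "z = c / of_real (cmod c)"
  have cz: "cmod z = 1" using False by (simp add: z_def c_def norm_divide)
  have "cinner (z *s a) b = of_real (cmod c)"
    using False by (simp add: cinner_scaleC_left z_def c_def complex_norm_square[symmetric]
        power2_eq_square field_simps)
  then have "cmod c = inner (z *s a) b" by (simp add: inner_Re_cinner)
  also have "\<dots> \<le> norm (z *s a) * norm b" by (rule norm_cauchy_schwarz)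
  also have "\<dots> = norm a * norm b" by (simp add: norm_scaleC cz)
  finally show ?thesis by (simp add: c_def)
qed

lemma mult_indicator_simps[simp]:
  "x * (if c then 1 else 0) = (if c then x else (0::'b::semiring_1))"
  "(if c then 1 else 0) * x = (if c then x else 0)"
  by simp_all

lemma mult_if_zero: "x * (if c then y else 0) = (if c then x * y else (0::'b::mult_zero))"
  by simp

lemma cinner_ket_left: "cinner (ket l) z = z $ l"
proof -
  have "cinner (ket l) z = (\<Sum>i\<in>UNIV. if i = l then z$i else 0)"
    unfolding cinner_def by (intro sum.cong refl) (simp add: ket_def)
  then show ?thesis by simp
qed

lemma cinner_ket[simp]: "cinner (ket p) (ket q) = (if p = q then 1 else 0)"
  by (simp add: cinner_ket_left) (simp add: ket_def)

lemma mult_ket_component[simp]: "(M *v ket j) $ i = M $ i $ j"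
  by (simp add: matrix_vector_mult_def ket_def cong: if_cong)

lemma vec_ket_expand: "v = (\<Sum>j\<in>UNIV. v$j *s ket j)"
  by (simp add: vec_eq_iff sum_component ket_def cong: if_cong)

lemma matrix_vector_scaleC: "(A::complex^'k^'m) *v (c *s v) = c *s (A *v v)"
  by (simp add: vec_eq_iff matrix_vector_mult_def sum_distrib_left mult_ac)

lemma matrix_vector_scaleR: "(A::complex^'k^'m) *v (r *\<^sub>R v) = r *\<^sub>R (A *v v)"
  by (simp add: scaleR_as_scaleC matrix_vector_scaleC)

lemma matrix_sum_mult_vec: "(sum f A) *v w = (\<Sum>k\<in>A. f k *v w)"
  by (simp add: vec_eq_iff matrix_vector_mult_def sum_component sum_distrib_right
      sum.swap[of _ UNIV A])


section \<open>Orthogonal projections\<close>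

text \<open>The real orthogonal
  decomposition of the library suffices, because the complex span is closed under
  multiplication by \<open>\<i>\<close>, which turns real orthogonality into complex orthogonality.\<close>
lemma complex_orthogonal_decomp:
  fixes S :: "(complex^'t::finite) set"
  shows "\<exists>y\<in>vec.span S. \<forall>w\<in>vec.span S. cinner w (v - y) = 0"
proof -
  let ?T = "vec.span S"
  have "subspace ?T"
    unfolding subspace_def
    by (auto simp: vec.span_zero vec.span_add scaleR_as_scaleC intro: vec.span_scale)
  then have spT: "span ?T = ?T" by simp
  obtain y z where y: "y \<in> span ?T" and z: "\<And>w. w \<in> span ?T \<Longrightarrow> orthogonal z w"
    and e: "v = y + z"
    using orthogonal_subspace_decomp_exists[of ?T v] by blast
  have "cinner w z = 0" if w: "w \<in> ?T" for w
  proof -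
    have "inner z w = 0" using z[of w] w spT by (simp add: orthogonal_def)
    then have re: "Re (cinner z w) = 0" by (simp add: inner_Re_cinner)
    have "\<i> *s w \<in> ?T" using w by (rule vec.span_scale)
    then have "inner z (\<i> *s w) = 0" using z spT by (simp add: orthogonal_def)
    then have im: "Im (cinner z w) = 0" by (simp add: inner_Re_cinner cinner_scaleC_right)
    from re im have "cinner z w = 0" by (simp add: complex_eq_iff)
    then show ?thesis by (metis cinner_cnj complex_cnj_zero)
  qed
  then show ?thesis using y spT e by (intro bexI[of _ y]) auto
qed

text \<open>Hence \<open>orth_proj S\<close> is well defined: the matrix whose columns project the basis vectors
  exists, and it is unique since a vector of the span orthogonal to the span vanishes.\<close>
lemma orth_proj_ex:
  fixes S :: "(complex^'t::finite) set"
  shows "\<exists>!P. \<forall>v. P *v v \<in> vec.span S \<and> (\<forall>w\<in>vec.span S. cinner w (v - P *v v) = 0)"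
proof -
  let ?T = "vec.span S"
  have "\<forall>j. \<exists>y\<in>?T. \<forall>w\<in>?T. cinner w (ket j - y) = 0"
    using complex_orthogonal_decomp by blast
  then obtain Y where Y: "\<And>j. Y j \<in> ?T" "\<And>j w. w \<in> ?T \<Longrightarrow> cinner w (ket j - Y j) = 0"
    by metis
  define P where "P = (\<chi> i j. Y j $ i)"
  have Pv: "P *v v = (\<Sum>j\<in>UNIV. v$j *s Y j)" for v
    by (simp add: vec_eq_iff P_def matrix_vector_mult_def sum_component mult.commute)
  have ex: "\<forall>v. P *v v \<in> ?T \<and> (\<forall>w\<in>?T. cinner w (v - P *v v) = 0)"
  proof (intro allI conjI ballI)
    fix v
    show "P *v v \<in> ?T" unfolding Pv by (intro vec.span_sum vec.span_scale Y)
    fix w assume w: "w \<in> ?T"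
    have "v - P *v v = (\<Sum>j\<in>UNIV. v$j *s (ket j - Y j))"
      by (subst (1) vec_ket_expand[of v]) (simp add: Pv vector_ssub_ldistrib sum_subtractf)
    then show "cinner w (v - P *v v) = 0"
      by (simp add: cinner_sum_right cinner_diff_right cinner_scaleC_right
        Y(2)[OF w, unfolded cinner_diff_right, simplified])
  qed
  have uniq: "P1 = P2"
    if h1: "\<forall>v. P1 *v v \<in> ?T \<and> (\<forall>w\<in>?T. cinner w (v - P1 *v v) = 0)"
      and h2: "\<forall>v. P2 *v v \<in> ?T \<and> (\<forall>w\<in>?T. cinner w (v - P2 *v v) = 0)"
    for P1 P2 :: "complex^'t^'t"
  proof -
    have "P1 *v v = P2 *v v" for v
    proof -
      let ?d = "P1 *v v - P2 *v v"
      have "?d \<in> ?T" using h1 h2 by (simp add: vec.span_diff)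
      then have "cinner ?d (v - P2 *v v) - cinner ?d (v - P1 *v v) = 0" using h1 h2 by simp
      then have "cinner ?d ?d = 0" by (simp add: cinner_diff_right)
      then show ?thesis using cinner_self_zero by fastforce
    qed
    then have "(P1 *v ket j) $ i = (P2 *v ket j) $ i" for i j by simp
    then show ?thesis by (simp add: vec_eq_iff)
  qed
  show ?thesis using ex uniq by blast
qed

lemma orth_proj_props:
  "orth_proj S *v v \<in> vec.span S"
  "w \<in> vec.span S \<Longrightarrow> cinner w (v - orth_proj S *v v) = 0"
  using theI'[OF orth_proj_ex[of S]] unfolding orth_proj_def by auto

lemma orth_proj_fix: "a \<in> vec.span S \<Longrightarrow> orth_proj S *v a = a"
proof -
  assume a: "a \<in> vec.span S"
  let ?d = "a - orth_proj S *v a"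
  have "?d \<in> vec.span S" using a orth_proj_props(1)[of S a] by (simp add: vec.span_diff)
  then have "cinner ?d ?d = 0" by (rule orth_proj_props(2))
  then show ?thesis using cinner_self_zero by fastforce
qed

lemma orth_proj_perp: "(\<forall>b\<in>S. cinner p b = 0) \<Longrightarrow> cinner p (orth_proj S *v w) = 0"
proof -
  assume h: "\<forall>b\<in>S. cinner p b = 0"
  have sub: "vec.subspace {b. cinner p b = 0}"
    by (auto simp: vec.subspace_def cinner_add_right cinner_scaleC_right)
  have "orth_proj S *v w \<in> {b. cinner p b = 0}"
    by (rule vec.span_subspace_induct[OF orth_proj_props(1) sub]) (use h in auto)
  then show ?thesis by simp
qed

section \<open>Rank-one operators\<close>

lemma outer_mult_vec: "outer a b *v w = cinner b w *s a"
  by (simp add: vec_eq_iff outer_def matrix_vector_mult_def cinner_def sum_distrib_left mult_ac)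

lemma matrix_outer_right: "M ** outer a b = outer (M *v a) b"
  by (simp add: vec_eq_iff outer_def matrix_matrix_mult_def matrix_vector_mult_def
      sum_distrib_left sum_distrib_right mult_ac)

lemma outer_outer: "outer a b ** outer c d = outer (cinner b c *s a) d"
  by (simp add: matrix_outer_right outer_mult_vec)

lemma outer_zero_left[simp]: "outer 0 b = 0"
  by (simp add: vec_eq_iff outer_def)

lemma outer_scaleR_left: "outer (r *\<^sub>R a) b = r *\<^sub>R outer a b"
  by (simp add: vec_eq_iff outer_def)

lemma matrix_add_rdistrib: "((B::complex^'k^'m) + C) ** (A::complex^'n^'k) = B ** A + C ** A"
  by (simp add: vec_eq_iff matrix_matrix_mult_def sum.distrib distrib_right)

lemma outer_times_zero:
  assumes "\<And>w. cinner b (M *v w) = 0"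
  shows "outer a b ** M = 0"
proof -
  have "(outer a b ** M) $ i $ j = a $ i * cinner b (M *v ket j)" for i j
    by (simp add: outer_def matrix_matrix_mult_def cinner_def sum_distrib_left mult_ac)
  then show ?thesis by (simp add: vec_eq_iff assms)
qed

lemma opnorm_outer: "opnorm (outer a b) \<le> norm a * norm b"
  unfolding opnorm_def
proof (rule onorm_le)
  fix w
  have "norm (outer a b *v w) = cmod (cinner b w) * norm a"
    by (simp add: outer_mult_vec norm_scaleC)
  also have "\<dots> \<le> (norm b * norm w) * norm a"
    by (intro mult_right_mono cinner_Cauchy_Schwarz) simp
  finally show "norm (outer a b *v w) \<le> norm a * norm b * norm w" by (simp add: mult_ac)
qed

lemma bounded_bilinear_outer: "bounded_bilinear (outer :: complex^'s::finite \<Rightarrow> complex^'t::finite \<Rightarrow> _)"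
proof -
  have "bilinear (outer :: complex^'s \<Rightarrow> complex^'t \<Rightarrow> _)"
    unfolding bilinear_def
    by (auto intro!: linearI simp: vec_eq_iff outer_def distrib_left distrib_right)
  then show ?thesis by (simp add: bilinear_conv_bounded_bilinear)
qed

text \<open>With \<open>a = p\<close> this is the identity \<open>P' P = |p'\<rangle>\<langle>p|\<close> for \<open>P = |p\<rangle>\<langle>p|\<close>.\<close>
lemma deriv_outer_times_proj:
  fixes a :: "real \<Rightarrow> complex^'s::finite" and p :: "real \<Rightarrow> complex^'t::finite"
  assumes da: "(a has_vector_derivative a') (at s)"
    and dp: "(p has_vector_derivative p') (at s)"
    and perp: "cinner p' (p s) = 0" and unit: "norm (p s) = 1"
  shows "vector_derivative (\<lambda>t. outer (a t) (p t)) (at s) ** outer (p s) (p s) = outer a' (p s)"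
proof -
  have "vector_derivative (\<lambda>t. outer (a t) (p t)) (at s) = outer (a s) p' + outer a' (p s)"
    by (rule vector_derivative_at,
        rule bounded_bilinear.has_vector_derivative[OF bounded_bilinear_outer da dp])
  moreover have "cinner (p s) (p s) = 1" using unit by (simp add: cinner_self)
  ultimately show ?thesis
    by (simp add: matrix_add_rdistrib outer_outer perp)
qed

lemma rank_one_adiabatic:
  fixes psi a :: "real \<Rightarrow> complex^'t::finite" and H :: "complex^'t^'t"
  assumes dpsi: "(psi has_vector_derivative c *\<^sub>R k) (at s)"
    and unit: "norm (psi s) = 1" and perp: "cinner k (psi s) = 0"
    and da: "(a has_vector_derivative a') (at s)"
    and H_perp: "\<And>w. cinner (psi s) (H *v w) = 0"
    and H_a: "H *v a s = k"
  shows "outer (c *\<^sub>R a s) (psi s) ** H = 0"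
    and "H ** outer (c *\<^sub>R a s) (psi s)
           = vector_derivative (\<lambda>t. outer (psi t) (psi t)) (at s) ** outer (psi s) (psi s)"
    and "vector_derivative (\<lambda>t. outer (c *\<^sub>R a t) (psi t)) (at s) ** outer (psi s) (psi s)
           = outer (c *\<^sub>R a') (psi s)"
proof -
  have perp': "cinner (c *\<^sub>R k) (psi s) = 0" by (simp add: cinner_scaleR_left perp)
  have dca: "((\<lambda>t. c *\<^sub>R a t) has_vector_derivative c *\<^sub>R a') (at s)"
    using has_vector_derivative_scaleR[OF DERIV_const da, of c] by simp
  show "outer (c *\<^sub>R a s) (psi s) ** H = 0"
    by (rule outer_times_zero) (rule H_perp)
  have "H ** outer (c *\<^sub>R a s) (psi s) = outer (c *\<^sub>R k) (psi s)"
    by (simp add: matrix_outer_right matrix_vector_scaleR H_a)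
  also have "\<dots> = vector_derivative (\<lambda>t. outer (psi t) (psi t)) (at s) ** outer (psi s) (psi s)"
    by (rule deriv_outer_times_proj[OF dpsi dpsi perp' unit, symmetric])
  finally show "H ** outer (c *\<^sub>R a s) (psi s)
           = vector_derivative (\<lambda>t. outer (psi t) (psi t)) (at s) ** outer (psi s) (psi s)" .
  show "vector_derivative (\<lambda>t. outer (c *\<^sub>R a t) (psi t)) (at s) ** outer (psi s) (psi s)
           = outer (c *\<^sub>R a') (psi s)"
    by (rule deriv_outer_times_proj[OF dca dpsi perp' unit])
qed


section \<open>The Hilbert space \<open>H\<^sub>O \<oplus> (H\<^sub>Q \<otimes> H\<^sub>W)\<close>\<close>

lemma sum_UNIV_sum_type:
  "(\<Sum>i\<in>(UNIV::('a::finite+'b::finite) set). f i) = (\<Sum>i\<in>UNIV. f (Inl i)) + (\<Sum>i\<in>UNIV. f (Inr i))"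
  by (simp flip: UNIV_Plus_UNIV add: sum.Plus comp_def)

lemma sum_prod_UNIV:
  "(\<Sum>i\<in>(UNIV::('a::finite\<times>'b::finite) set). f i) = (\<Sum>a\<in>UNIV. \<Sum>b\<in>UNIV. f (a,b))"
  unfolding sum.cartesian_product UNIV_Times_UNIV by (rule sum.cong) auto

lemma embO_Inl[simp]: "embO b phi $ Inl (c,k) = (if c = b then phi$k else 0)"
  by (simp add: embO_def)
lemma embO_Inr[simp]: "embO b phi $ Inr p = 0"
  by (simp add: embO_def)
lemma embQW_Inl[simp]: "embQW i a w $ Inl p = 0"
  by (simp add: embQW_def)
lemma embQW_Inr[simp]: "embQW i a w $ Inr (j,z,l) = (if j = i then a$z * w$l else 0)"
  by (simp add: embQW_def)

lemma cinner_embO_embO[simp]: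
  "cinner (embO b phi) (embO c psi) = (if b = c then cinner phi psi else 0)"
  by (cases b; cases c) (simp_all add: cinner_def sum_UNIV_sum_type sum_prod_UNIV UNIV_bool)

lemma cinner_embO_embQW[simp]: "cinner (embO b phi) (embQW i a w) = 0"
  by (simp add: cinner_def sum_UNIV_sum_type)

lemma cinner_embQW_embO[simp]: "cinner (embQW i a w) (embO b phi) = 0"
  by (simp add: cinner_def sum_UNIV_sum_type)

lemma cinner_embQW_embQW[simp]:
  "cinner (embQW i a w :: complex^('n::finite,'a::finite,'d::finite,'m::finite) hidx) (embQW j b z)
     = (if i = j then cinner a b * cinner w z else 0)"
proof -
  let ?e = "\<lambda>k zz l. cnj ((embQW i a w :: complex^('n,'a,'d,'m) hidx) $ Inr (k,zz,l))
                     * (embQW j b z :: complex^('n,'a,'d,'m) hidx) $ Inr (k,zz,l)"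
  have "cinner (embQW i a w :: complex^('n,'a,'d,'m) hidx) (embQW j b z)
      = (\<Sum>k\<in>UNIV. \<Sum>zz\<in>UNIV. \<Sum>l\<in>UNIV. ?e k zz l)"
    by (simp add: cinner_def sum_UNIV_sum_type sum_prod_UNIV)
  also have "\<dots> = (\<Sum>k\<in>UNIV. if k = i \<and> k = j
                    then (\<Sum>zz\<in>UNIV. \<Sum>l\<in>UNIV. cnj (a$zz * w$l) * (b$zz * z$l)) else 0)"
  proof (intro sum.cong refl)
    fix k show "(\<Sum>zz\<in>UNIV. \<Sum>l\<in>UNIV. ?e k zz l) = (if k = i \<and> k = j
        then (\<Sum>zz\<in>UNIV. \<Sum>l\<in>UNIV. cnj (a$zz * w$l) * (b$zz * z$l)) else 0)"
      by (cases "k = i"; cases "k = j") simp_all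
  qed
  also have "\<dots> = (if i = j then (\<Sum>zz\<in>UNIV. \<Sum>l\<in>UNIV. cnj (a$zz * w$l) * (b$zz * z$l)) else 0)"
    by (cases "i = j") (auto simp: sum.delta' intro!: sum.neutral)
  also have "(\<Sum>zz\<in>UNIV. \<Sum>l\<in>UNIV. cnj (a$zz * w$l) * (b$zz * z$l)) = cinner a b * cinner w z"
    by (simp add: cinner_def sum_product mult_ac) (rule sum.swap)
  finally show ?thesis by simp
qed

lemma sqrt2_square_complex[simp]: "complex_of_real (sqrt 2) * complex_of_real (sqrt 2) = 2"
  by (simp flip: of_real_mult)

lemma half_sqrt2: "complex_of_real (1 / sqrt 2) * complex_of_real (1 / sqrt 2) = 1/2"
  by (simp flip: of_real_mult)

lemma cinner_y_plus_y_minus: "cinner (y_plus y) (y_minus z) = (if y = z then 0 else 1/2)"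
  by (simp add: y_plus_def y_minus_def cinner_scaleR_left cinner_scaleR_right cinner_add_left
      cinner_add_right cinner_diff_right half_sqrt2 mult.assoc[symmetric])
lemma cinner_y_minus_y_plus: "cinner (y_minus y) (y_plus y) = 0"
  by (simp add: y_plus_def y_minus_def cinner_scaleR_left cinner_scaleR_right cinner_add_left
      cinner_add_right cinner_diff_left half_sqrt2 mult.assoc[symmetric])
lemma cinner_y_minus_y_minus: "cinner (y_minus y) (y_minus y) = 1"
  by (simp add: y_minus_def cinner_scaleR_left cinner_scaleR_right cinner_diff_left
      cinner_diff_right half_sqrt2 mult.assoc[symmetric])
lemma cinner_y_plus_y_plus: "cinner (y_plus y) (y_plus y) = 1"
  by (simp add: y_plus_def cinner_scaleR_left cinner_scaleR_right cinner_add_left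
      cinner_add_right half_sqrt2 mult.assoc[symmetric])

definition Q_plus :: "('n::finite \<Rightarrow> 'a::finite) \<Rightarrow> ('n \<Rightarrow> complex^'m::finite)
    \<Rightarrow> complex^('n,'a,'d::finite,'m) hidx" where
  "Q_plus x p = (\<Sum>i\<in>UNIV. embQW i (y_plus (x i)) (p i))"

definition Q_minus :: "('n::finite \<Rightarrow> 'a::finite) \<Rightarrow> ('n \<Rightarrow> complex^'m::finite)
    \<Rightarrow> complex^('n,'a,'d::finite,'m) hidx" where
  "Q_minus x q = (\<Sum>i\<in>UNIV. embQW i (y_minus (x i)) (q i))"

lemma cinner_embO_Q[simp]:
  "cinner (embO b phi) (Q_plus x p) = 0" "cinner (Q_plus x p) (embO b phi) = 0"
  "cinner (embO b phi) (Q_minus x q) = 0" "cinner (Q_minus x q) (embO b phi) = 0"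
  by (simp_all add: Q_plus_def Q_minus_def cinner_sum_right cinner_sum_left)

lemma cinner_Q_Q[simp]:
  "cinner (Q_plus x p) (Q_plus x p') = (\<Sum>i\<in>UNIV. cinner (p i) (p' i))"
  "cinner (Q_minus x q) (Q_minus x q') = (\<Sum>i\<in>UNIV. cinner (q i) (q' i))"
  "cinner (Q_plus x p) (Q_minus x q) = 0"
  "cinner (Q_minus x q) (Q_plus x p) = 0"
  by (simp_all add: Q_plus_def Q_minus_def cinner_sum_right cinner_sum_left cinner_y_plus_y_plus
      cinner_y_minus_y_minus cinner_y_plus_y_minus cinner_y_minus_y_plus if_distrib sum.delta
      cong: if_cong)

text \<open>For different strings \<open>x, y\<close> only the positions where they differ contribute; this is how
  the matrices \<open>\<Delta>\<^sub>i\<close> enter.\<close>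
lemma cinner_Q_plus_Q_minus:
  "cinner (Q_plus x p) (Q_minus y q) = (\<Sum>i\<in>UNIV. (if x i = y i then 0 else 1/2) * cinner (p i) (q i))"
  by (simp add: Q_minus_def Q_plus_def cinner_sum_right cinner_sum_left cinner_y_plus_y_minus
      if_distrib sum.delta cong: if_cong)

lemma cinner_frame:
  "cinner (a1 *s embO False r + b1 *s embO True t + g1 *s Q_plus x p1 + h1 *s Q_minus x q1)
          (a2 *s embO False r + b2 *s embO True t + g2 *s Q_plus x p2 + h2 *s Q_minus x q2)
   = cnj a1 * a2 * cinner r r + cnj b1 * b2 * cinner t t
     + cnj g1 * g2 * (\<Sum>i\<in>UNIV. cinner (p1 i) (p2 i)) + cnj h1 * h2 * (\<Sum>i\<in>UNIV. cinner (q1 i) (q2 i))"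
  by (simp add: cinner_add_left cinner_add_right cinner_scaleC_left cinner_scaleC_right)

section \<open>The projection \<open>\<Pi>\<^sub>x\<close>\<close>

definition basis_minus :: "('n::finite \<Rightarrow> 'a::finite) \<Rightarrow> 'n \<Rightarrow> 'm::finite
    \<Rightarrow> complex^('n,'a,'d::finite,'m) hidx" where
  "basis_minus x i l = embQW i (y_minus (x i)) (ket l)"

lemma Pi_x_mult: "Pi_x x *v w = (\<Sum>i\<in>UNIV. \<Sum>l\<in>UNIV. cinner (basis_minus x i l) w *s basis_minus x i l)"
  by (simp add: Pi_x_def basis_minus_def matrix_sum_mult_vec outer_mult_vec)

lemma embQW_ket_expand:
  "(\<Sum>l\<in>UNIV. z$l *s embQW i a (ket l)) = (embQW i a z :: complex^('n::finite,'a::finite,'d::finite,'m::finite) hidx)"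
proof (rule vec_eq_iff[THEN iffD2], rule allI)
  fix idx :: "('n,'a,'d,'m) hidx"
  show "(\<Sum>l\<in>UNIV. z$l *s embQW i a (ket l)) $ idx = (embQW i a z :: complex^('n,'a,'d,'m) hidx) $ idx"
  proof (cases idx)
    case (Inl p) then show ?thesis by (simp add: sum_component)
  next
    case (Inr p)
    then obtain j zz l' where "idx = Inr (j,zz,l')" by (cases p) auto
    then show ?thesis
      by (cases "j = i") (simp_all add: sum_component ket_def mult_if_zero mult.commute)
  qed
qed

lemma Pi_x_embO: "Pi_x x *v embO b phi = 0"
  by (simp add: Pi_x_mult basis_minus_def)

lemma Pi_x_Q_minus: "Pi_x x *v Q_minus x q = Q_minus x q"
proof -
  have coeff: "cinner (basis_minus x i l) (Q_minus x q) = q i $ l" for i l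
    by (simp add: basis_minus_def Q_minus_def cinner_sum_right cinner_y_minus_y_minus
        cinner_ket_left if_distrib cong: if_cong)
  have "Pi_x x *v Q_minus x q = (\<Sum>i\<in>UNIV. \<Sum>l\<in>UNIV. q i $ l *s basis_minus x i l)"
    unfolding Pi_x_mult coeff ..
  also have "\<dots> = Q_minus x q"
    unfolding basis_minus_def embQW_ket_expand Q_minus_def ..
  finally show ?thesis .
qed

lemma cinner_Pi_x_range:
  fixes w :: "complex^('n::finite,'a::finite,'d::finite,'m::finite) hidx"
  shows "cinner (embO b r) (Pi_x x *v w) = 0"
    and "cinner (Q_plus x p) (Pi_x x *v w) = 0"
proof -
  have "cinner (embO b r) (basis_minus x i l :: complex^('n,'a,'d,'m) hidx) = 0"
    "cinner (Q_plus x p) (basis_minus x i l :: complex^('n,'a,'d,'m) hidx) = 0" for i l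
    by (simp_all add: basis_minus_def Q_plus_def cinner_sum_left cinner_y_plus_y_minus)
  then show "cinner (embO b r) (Pi_x x *v w) = 0" "cinner (Q_plus x p) (Pi_x x *v w) = 0"
    by (simp_all add: Pi_x_mult cinner_sum_right cinner_scaleC_right)
qed


section \<open>The vectors \<open>\<Psi>\<^sup>\<plusminus>\<^sub>x(s)\<close>\<close>

text \<open>The norm \<open>N\<^sub>x\<close> of \<open>\<Psi>\<^sup>+\<^sub>x(s)\<close>, which does not depend on \<open>s\<close>.\<close>
definition N_plus :: "(('n\<Rightarrow>'a) \<Rightarrow> 'n \<Rightarrow> complex^'m) \<Rightarrow> real \<Rightarrow> real \<Rightarrow> ('n\<Rightarrow>'a) \<Rightarrow> real" where
  "N_plus u W eps x = sqrt (1 + (eps / sqrt W)\<^sup>2 * (\<Sum>i\<in>UNIV. (norm (u x i))\<^sup>2))"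

text \<open>The derivative \<open>\<partial>\<^sub>s\<Psi>\<^sup>-\<^sub>x(s)\<close>; note \<open>\<xi>(s) = sin (\<pi>s)\<close>.\<close>
definition dPsi_minus :: "(('n\<Rightarrow>'a) \<Rightarrow> complex^'d) \<Rightarrow> (('n\<Rightarrow>'a) \<Rightarrow> complex^'d)
     \<Rightarrow> (('n\<Rightarrow>'a) \<Rightarrow> 'n \<Rightarrow> complex^'m) \<Rightarrow> real \<Rightarrow> real \<Rightarrow> real \<Rightarrow> ('n\<Rightarrow>'a)
     \<Rightarrow> complex^('n::finite,'a::finite,'d::finite,'m::finite) hidx" where
  "dPsi_minus rv sv v W s eps x =
     - (pi/2) *\<^sub>R k_plus rv sv s x + (pi * cos (pi * s) * sqrt W / eps) *\<^sub>R Q_minus x (v x)"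

lemma N_plus_ge_1: "1 \<le> N_plus u W eps x"
  by (simp add: N_plus_def sum_nonneg)

lemma xi_eq: "xi s = sin (pi * s)"
  using sin_double[of "theta s"] by (simp add: xi_def theta_def mult_ac)

lemma Psi_plus_frame: "Psi_plus rv sv u W s eps x =
   of_real (cos (theta s)) *s embO False (rv x) + of_real (sin (theta s)) *s embO True (sv x)
   + of_real (eps / sqrt W) *s Q_plus x (u x) + 0 *s Q_minus x (u x)"
  by (simp add: Psi_plus_def k_plus_def Q_plus_def scaleR_as_scaleC)

lemma Psi_minus_frame: "Psi_minus rv sv v W s eps x =
   of_real (- sin (theta s)) *s embO False (rv x) + of_real (cos (theta s)) *s embO True (sv x)
   + 0 *s Q_plus x (v x) + of_real (xi s * sqrt W / eps) *s Q_minus x (v x)"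
  by (simp add: Psi_minus_def k_minus_def Q_minus_def scaleR_as_scaleC)

lemma k_minus_frame: "k_minus rv sv s x =
   of_real (- sin (theta s)) *s embO False (rv x) + of_real (cos (theta s)) *s embO True (sv x)
   + 0 *s Q_plus x p + 0 *s Q_minus x p"
  by (simp add: k_minus_def scaleR_as_scaleC)

lemma dPsi_minus_frame: "dPsi_minus rv sv v W s eps x =
   of_real (- (pi/2) * cos (theta s)) *s embO False (rv x)
   + of_real (- (pi/2) * sin (theta s)) *s embO True (sv x)
   + 0 *s Q_plus x (v x) + of_real (pi * cos (pi * s) * sqrt W / eps) *s Q_minus x (v x)"
  by (simp add: dPsi_minus_def k_plus_def scaleR_add_right scaleR_as_scaleC vector_add_ldistrib
      vector_smult_assoc)

lemma has_vector_derivative_comb3: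
  assumes "(f has_field_derivative f') (at s)" "(g has_field_derivative g') (at s)"
    "(h has_field_derivative h') (at s)"
  shows "((\<lambda>s. f s *\<^sub>R A + g s *\<^sub>R B + h s *\<^sub>R C)
          has_vector_derivative (f' *\<^sub>R A + g' *\<^sub>R B + h' *\<^sub>R C)) (at s)"
  by (rule has_vector_derivative_eq_rhs,
      (rule has_vector_derivative_add has_vector_derivative_scaleR has_vector_derivative_const assms)+)
    simp

lemma Psi_plus_deriv:
  "((\<lambda>s. Psi_plus rv sv u W s eps x) has_vector_derivative (pi/2) *\<^sub>R k_minus rv sv s x) (at s)"
proof -
  have "((\<lambda>s. Psi_plus rv sv u W s eps x) has_vector_derivative
     (- sin (pi / 2 * s) * (pi/2)) *\<^sub>R embO False (rv x) + (cos (pi / 2 * s) * (pi/2)) *\<^sub>R embO True (sv x)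
     + 0 *\<^sub>R (\<Sum>i\<in>UNIV. embQW i (y_plus (x i)) (u x i))) (at s)"
    unfolding Psi_plus_def k_plus_def theta_def
    by (rule has_vector_derivative_comb3) (auto intro!: derivative_eq_intros)
  then show ?thesis
    by (rule has_vector_derivative_eq_rhs) (simp add: k_minus_def theta_def algebra_simps)
qed

lemma Psi_minus_deriv:
  assumes "eps \<noteq> 0"
  shows "((\<lambda>s. Psi_minus rv sv v W s eps x) has_vector_derivative dPsi_minus rv sv v W s eps x) (at s)"
proof -
  have "((\<lambda>s. Psi_minus rv sv v W s eps x) has_vector_derivative
     (- cos (pi / 2 * s) * (pi/2)) *\<^sub>R embO False (rv x) + (- sin (pi / 2 * s) * (pi/2)) *\<^sub>R embO True (sv x)
     + (cos (pi * s) * pi * sqrt W / eps) *\<^sub>R Q_minus x (v x)) (at s)"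
    unfolding Psi_minus_def k_minus_def theta_def xi_eq Q_minus_def
    by (rule has_vector_derivative_comb3) (use assms in \<open>auto intro!: derivative_eq_intros\<close>)
  then show ?thesis
    by (rule has_vector_derivative_eq_rhs) (simp add: dPsi_minus_def k_plus_def theta_def algebra_simps)
qed

text \<open>The key orthogonality \<open>\<Psi>\<^sup>+\<^sub>x(s) \<perp> \<Psi>\<^sup>-\<^sub>y(s)\<close>: the \<open>H\<^sub>O\<close> parts contribute
  \<open>cos \<theta> sin \<theta> (\<sigma>\<^sub>x\<^sub>y - \<rho>\<^sub>x\<^sub>y)\<close>, and by the decomposition of \<open>\<rho> - \<sigma>\<close> the \<open>H\<^sub>Q \<otimes> H\<^sub>W\<close> parts
  contribute \<open>\<xi>/2 (\<rho>\<^sub>x\<^sub>y - \<sigma>\<^sub>x\<^sub>y)\<close>, which cancels it since \<open>\<xi> = 2 cos \<theta> sin \<theta>\<close>.\<close>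
lemma cinner_Psi_plus_Psi_minus:
  fixes rv sv :: "('n::finite \<Rightarrow> 'a::finite) \<Rightarrow> complex^'d::finite"
    and u v :: "('n \<Rightarrow> 'a) \<Rightarrow> 'n \<Rightarrow> complex^'m::finite"
  assumes W: "W > 0" and eps: "eps \<noteq> 0"
    and dec: "cinner (rv x) (rv y) - cinner (sv x) (sv y)
                = (\<Sum>i\<in>UNIV. Delta i $ x $ y * cinner (u x i) (v y i))"
  shows "cinner (Psi_plus rv sv u W s eps x) (Psi_minus rv sv v W s eps y) = 0"
proof -
  have QQ: "cinner (Q_plus x (u x) :: complex^('n,'a,'d,'m) hidx)
                   (Q_minus y (v y)) = (cinner (rv x) (rv y) - cinner (sv x) (sv y)) / 2"
  proof -
    have "cinner (rv x) (rv y) - cinner (sv x) (sv y)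
        = 2 * (\<Sum>i\<in>UNIV. (if x i = y i then 0 else 1/2) * cinner (u x i) (v y i))"
      unfolding dec sum_distrib_left by (intro sum.cong refl) (simp add: Delta_def)
    then show ?thesis by (simp add: cinner_Q_plus_Q_minus)
  qed
  have coeff: "complex_of_real (eps / sqrt W) * complex_of_real (xi s * sqrt W / eps)
        = 2 * complex_of_real (cos (theta s)) * complex_of_real (sin (theta s))"
  proof -
    have "(eps / sqrt W) * (xi s * sqrt W / eps) = 2 * cos (theta s) * sin (theta s)"
      using eps W by (simp add: xi_def field_simps)
    then show ?thesis by (metis of_real_mult of_real_numeral)
  qed
  have "cinner (Psi_plus rv sv u W s eps x) (Psi_minus rv sv v W s eps y) =
       complex_of_real (cos (theta s)) * complex_of_real (- sin (theta s)) * cinner (rv x) (rv y)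
     + complex_of_real (sin (theta s)) * complex_of_real (cos (theta s)) * cinner (sv x) (sv y)
     + (complex_of_real (eps / sqrt W) * complex_of_real (xi s * sqrt W / eps))
       * cinner (Q_plus x (u x) :: complex^('n,'a,'d,'m) hidx) (Q_minus y (v y))"
    unfolding Psi_plus_frame Psi_minus_frame cinner_add_left cinner_add_right
      cinner_scaleC_left cinner_scaleC_right
    by simp
  also have "\<dots> = 0" unfolding coeff QQ by (simp add: field_simps)
  finally show ?thesis .
qed

text \<open>\<open>\<Lambda>(s)\<close> fixes \<open>\<Psi>\<^sup>-\<^sub>x(s)\<close> and \<open>\<Pi>\<^sub>x\<close> removes exactly its \<open>H\<^sub>Q \<otimes> H\<^sub>W\<close> part, so
  \<open>H\<^sub>x(s) \<Psi>\<^sup>-\<^sub>x(s) = k\<^sup>-\<^sub>x(s)\<close>.\<close>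
lemma H_x_Psi_minus:
  assumes "x \<in> XX"
  shows "H_x XX rv sv v W s eps x *v Psi_minus rv sv v W s eps x = k_minus rv sv s x"
proof -
  have "Psi_minus rv sv v W s eps x \<in> vec.span ((\<lambda>y. Psi_minus rv sv v W s eps y) ` XX)"
    using assms by (auto intro!: vec.span_base)
  then have "Lambda XX rv sv v W s eps *v Psi_minus rv sv v W s eps x = Psi_minus rv sv v W s eps x"
    unfolding Lambda_def by (rule orth_proj_fix)
  moreover have "Pi_x x *v Psi_minus rv sv v W s eps x = of_real (xi s * sqrt W / eps) *s Q_minus x (v x)"
    unfolding Psi_minus_frame matrix_vector_right_distrib matrix_vector_scaleC
    by (simp add: Pi_x_embO Pi_x_Q_minus)
  ultimately show ?thesis
    by (simp add: H_x_def matrix_vector_mult_diff_rdistrib Psi_minus_frame k_minus_frame[where p = "v x"])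
qed

text \<open>If \<open>\<Psi>\<^sup>+\<^sub>x(s)\<close> is orthogonal to all \<open>\<Psi>\<^sup>-\<^sub>y(s)\<close>, then \<open>\<psi>\<^sup>+\<^sub>x(s)\<close> is orthogonal to the range
  of \<open>H\<^sub>x(s)\<close>: it is orthogonal to the range of \<open>\<Lambda>(s)\<close> and to that of \<open>\<Pi>\<^sub>x\<close>.\<close>
lemma psi_plus_perp_H_x:
  assumes "\<forall>y\<in>XX. cinner (Psi_plus rv sv u W s eps x) (Psi_minus rv sv v W s eps y) = 0"
  shows "cinner (psi_plus rv sv u W s eps x) (H_x XX rv sv v W s eps x *v w) = 0"
proof -
  have "cinner (Psi_plus rv sv u W s eps x) (Lambda XX rv sv v W s eps *v w) = 0"
    unfolding Lambda_def by (rule orth_proj_perp) (use assms in auto)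
  moreover have "cinner (Psi_plus rv sv u W s eps x) (Pi_x x *v w) = 0"
    unfolding Psi_plus_frame cinner_add_left cinner_scaleC_left
    by (simp add: cinner_Pi_x_range)
  ultimately show ?thesis
    by (simp add: psi_plus_def H_x_def matrix_vector_mult_diff_rdistrib cinner_diff_right
        cinner_scaleR_left)
qed

lemma coeff_sq_le:
  assumes "\<bar>t\<bar> \<le> 1" "0 \<le> V" "V \<le> W" "0 < W"
  shows "(t * sqrt W / eps)\<^sup>2 * V \<le> (W / eps)\<^sup>2"
proof -
  have "(t * sqrt W / eps)\<^sup>2 * V = t\<^sup>2 * (W / eps\<^sup>2) * V"
    using assms(4) by (simp add: power_mult_distrib power_divide)
  also have "\<dots> \<le> 1 * (W / eps\<^sup>2) * W"
    using assms by (intro mult_mono) (auto simp: abs_square_le_1)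
  finally show ?thesis by (simp add: power_divide power2_eq_square)
qed

context
  fixes rv sv :: "('n::finite \<Rightarrow> 'a::finite) \<Rightarrow> complex^'d::finite" and x :: "'n \<Rightarrow> 'a"
  assumes unit: "norm (rv x) = 1" "norm (sv x) = 1"
begin

private lemma unit_cinner: "cinner (rv x) (rv x) = 1" "cinner (sv x) (sv x) = 1"
  using unit by (simp_all add: cinner_self)

lemma norm_Psi_plus: "norm (Psi_plus rv sv u W s eps x) = N_plus u W eps x"
proof -
  have "(norm (Psi_plus rv sv u W s eps x))\<^sup>2 = 1 + (eps / sqrt W)\<^sup>2 * (\<Sum>i\<in>UNIV. (norm (u x i))\<^sup>2)"
    unfolding norm_sq_cinner Psi_plus_frame cinner_frame
    by (simp add: unit_cinner unit cinner_self power2_eq_square flip: of_real_mult)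
  then show ?thesis
    unfolding N_plus_def by (metis norm_ge_zero real_sqrt_unique)
qed

lemma psi_plus_eq: "psi_plus rv sv u W s eps x = (1 / N_plus u W eps x) *\<^sub>R Psi_plus rv sv u W s eps x"
  by (simp add: psi_plus_def norm_Psi_plus)

lemma cinner_k_minus_Psi_plus: "cinner (k_minus rv sv s x) (Psi_plus rv sv u W s eps x) = 0"
  unfolding k_minus_frame[where p = "u x"] Psi_plus_frame cinner_frame
  by (simp add: unit_cinner algebra_simps)

lemma norm_Psi_minus_sq:
  "(norm (Psi_minus rv sv v W s eps x))\<^sup>2 = 1 + (xi s * sqrt W / eps)\<^sup>2 * (\<Sum>i\<in>UNIV. (norm (v x i))\<^sup>2)"
proof -
  have "(norm (Psi_minus rv sv v W s eps x))\<^sup>2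
      = ((sin (theta s))\<^sup>2 + (cos (theta s))\<^sup>2) + (xi s * sqrt W / eps)\<^sup>2 * (\<Sum>i\<in>UNIV. (norm (v x i))\<^sup>2)"
    unfolding norm_sq_cinner Psi_minus_frame cinner_frame
    by (simp add: unit_cinner unit cinner_self power2_eq_square flip: of_real_mult)
  then show ?thesis by simp
qed

lemma norm_dPsi_minus_sq:
  "(norm (dPsi_minus rv sv v W s eps x))\<^sup>2
     = (pi/2)\<^sup>2 + (pi * cos (pi * s) * sqrt W / eps)\<^sup>2 * (\<Sum>i\<in>UNIV. (norm (v x i))\<^sup>2)"
proof -
  have trig: "pi * cos t * (pi * cos t) + pi * sin t * (pi * sin t) = pi * pi" for t
  proof -
    have "pi * cos t * (pi * cos t) + pi * sin t * (pi * sin t) = pi\<^sup>2 * ((sin t)\<^sup>2 + (cos t)\<^sup>2)"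
      by (simp only: power2_eq_square) algebra
    then show ?thesis by (simp add: power2_eq_square[symmetric])
  qed
  show ?thesis
    unfolding norm_sq_cinner dPsi_minus_frame cinner_frame
    by (simp add: unit_cinner unit cinner_self power2_eq_square trig flip: of_real_mult)
qed


lemma norm_psi_plus: "norm (psi_plus rv sv u W s eps x) = 1"
  using N_plus_ge_1[of u W eps x] by (simp add: psi_plus_eq norm_Psi_plus)

lemma psi_plus_deriv:
  "((\<lambda>s. psi_plus rv sv u W s eps x) has_vector_derivative
      (pi / (2 * N_plus u W eps x)) *\<^sub>R k_minus rv sv s x) (at s)"
proof -
  have "((\<lambda>s. (1 / N_plus u W eps x) *\<^sub>R Psi_plus rv sv u W s eps x) has_vector_derivative
        (1 / N_plus u W eps x) *\<^sub>R ((pi/2) *\<^sub>R k_minus rv sv s x) + 0 *\<^sub>R Psi_plus rv sv u W s eps x) (at s)"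
    by (intro has_vector_derivative_scaleR DERIV_const Psi_plus_deriv)
  then show ?thesis by (simp add: psi_plus_eq mult.commute)
qed

lemma cinner_k_minus_psi_plus: "cinner (k_minus rv sv s x) (psi_plus rv sv u W s eps x) = 0"
  by (simp add: psi_plus_eq cinner_scaleR_right cinner_k_minus_Psi_plus)

context
  fixes v :: "('n \<Rightarrow> 'a) \<Rightarrow> 'n \<Rightarrow> complex^'m::finite" and W eps :: real
  assumes v_bnd: "(\<Sum>i\<in>UNIV. (norm (v x i))\<^sup>2) \<le> W" and eps: "0 < eps" "eps / 2 \<le> W"
begin

private lemma W_over_eps: "1 \<le> 4 * (W / eps)\<^sup>2" "0 < W"
proof -
  have "1/2 \<le> W / eps" using eps by (simp add: field_simps)
  then have "(1/2)\<^sup>2 \<le> (W / eps)\<^sup>2" by (intro power_mono) auto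
  moreover have "(1/2::real)\<^sup>2 = 1/4" by (simp add: power2_eq_square)
  ultimately show "1 \<le> 4 * (W / eps)\<^sup>2" by linarith
  show "0 < W" using eps by simp
qed

lemma norm_Psi_minus_le: "norm (Psi_minus rv sv v W s eps x) \<le> sqrt 5 * (W / eps)"
proof (rule power2_le_imp_le)
  have "(norm (Psi_minus rv sv v W s eps x))\<^sup>2
      = 1 + (xi s * sqrt W / eps)\<^sup>2 * (\<Sum>i\<in>UNIV. (norm (v x i))\<^sup>2)"
    by (rule norm_Psi_minus_sq)
  also have "\<dots> \<le> 1 + (W / eps)\<^sup>2"
    using v_bnd W_over_eps by (simp add: coeff_sq_le xi_eq sum_nonneg)
  also have "\<dots> \<le> (sqrt 5 * (W / eps))\<^sup>2"
    using W_over_eps(1) by (simp only: power_mult_distrib real_sqrt_pow2)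
  finally show "(norm (Psi_minus rv sv v W s eps x))\<^sup>2 \<le> (sqrt 5 * (W / eps))\<^sup>2" .
  show "0 \<le> sqrt 5 * (W / eps)" using W_over_eps eps by simp
qed

lemma norm_dPsi_minus_le: "norm (dPsi_minus rv sv v W s eps x) \<le> sqrt 2 * pi * (W / eps)"
proof (rule power2_le_imp_le)
  have "(pi * cos (pi * s) * sqrt W / eps)\<^sup>2 * (\<Sum>i\<in>UNIV. (norm (v x i))\<^sup>2)
      = pi\<^sup>2 * ((cos (pi * s) * sqrt W / eps)\<^sup>2 * (\<Sum>i\<in>UNIV. (norm (v x i))\<^sup>2))"
    by (simp add: power_mult_distrib power_divide)
  also have "\<dots> \<le> pi\<^sup>2 * (W / eps)\<^sup>2"
    using v_bnd W_over_eps by (intro mult_left_mono coeff_sq_le) (auto simp: sum_nonneg)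
  finally have "(norm (dPsi_minus rv sv v W s eps x))\<^sup>2 \<le> (pi/2)\<^sup>2 + pi\<^sup>2 * (W / eps)\<^sup>2"
    by (simp add: norm_dPsi_minus_sq)
  moreover have "(pi/2)\<^sup>2 \<le> pi\<^sup>2 * (W / eps)\<^sup>2"
  proof -
    have "pi\<^sup>2 / 4 * 1 \<le> pi\<^sup>2 / 4 * (4 * (W / eps)\<^sup>2)"
      using W_over_eps by (intro mult_left_mono) auto
    then show ?thesis by (simp add: power_divide)
  qed
  moreover have "(sqrt 2 * pi * (W / eps))\<^sup>2 = 2 * (pi\<^sup>2 * (W / eps)\<^sup>2)"
    by (simp only: power_mult_distrib real_sqrt_pow2)
  ultimately show "(norm (dPsi_minus rv sv v W s eps x))\<^sup>2 \<le> (sqrt 2 * pi * (W / eps))\<^sup>2"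
    by linarith
  show "0 \<le> sqrt 2 * pi * (W / eps)" using W_over_eps eps by simp
qed

end

end


lemma opnorm_scaled_outer_le:
  assumes "norm b = 1" "0 \<le> c" "c \<le> C" "norm a \<le> B"
  shows "opnorm (outer (c *\<^sub>R a) b) \<le> C * B"
proof -
  have "opnorm (outer (c *\<^sub>R a) b) \<le> c * norm a"
    using opnorm_outer[of "c *\<^sub>R a" b] assms(1,2) by simp
  also have "\<dots> \<le> C * B"
    using assms by (intro mult_mono) auto
  finally show ?thesis .
qed

text \<open>The numerical constants of the theorem: \<open>\<pi>\<surd>5 + \<pi>\<^sup>2/\<surd>2 \<approx> 14.0 \<le> 15\<close>.\<close>
lemma bound_constants:
  fixes r a b :: real
  assumes "0 \<le> r" "a \<le> pi / 2 * (sqrt 5 * r)" "b \<le> pi / 2 * (sqrt 2 * pi * r)"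
  shows "a \<le> pi * sqrt 5 / 2 * r \<and> b \<le> pi\<^sup>2 / sqrt 2 * r \<and> 2 * a + b \<le> 15 * r"
proof -
  have pi: "pi \<le> 3.15" using pi_approx by simp
  have s5: "sqrt 5 \<le> 2.25" by (rule real_le_lsqrt) (auto simp: power2_eq_square)
  have s2: "sqrt 2 \<le> 1.5" by (rule real_le_lsqrt) (auto simp: power2_eq_square)
  have sqrt2: "pi / 2 * (sqrt 2 * pi) = pi\<^sup>2 / sqrt 2"
  proof -
    have "sqrt 2 / 2 = 1 / sqrt 2" by (simp add: field_simps)
    then show ?thesis by (simp add: power2_eq_square field_simps)
  qed
  have a: "a \<le> pi * sqrt 5 / 2 * r" using assms(2) by simp
  have b: "b \<le> pi\<^sup>2 / sqrt 2 * r" using assms(3) sqrt2 by (metis mult.assoc)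
  have "pi * sqrt 5 \<le> 3.15 * 2.25" using pi s5 by (intro mult_mono) auto
  moreover have "pi\<^sup>2 * sqrt 2 \<le> 3.15\<^sup>2 * 1.5"
    using pi s2 by (intro mult_mono power_mono) auto
  moreover have "pi\<^sup>2 / sqrt 2 = pi\<^sup>2 * sqrt 2 / 2" by (simp add: field_simps)
  ultimately have "pi * sqrt 5 + pi\<^sup>2 / sqrt 2 \<le> 15" by (simp add: power2_eq_square)
  then have "(pi * sqrt 5 + pi\<^sup>2 / sqrt 2) * r \<le> 15 * r"
    using assms(1) by (rule mult_right_mono)
  then have "2 * a + b \<le> 15 * r" using a b by (simp add: algebra_simps)
  with a b show ?thesis by blast
qed

theorem mainTheorem10:
  fixes XX :: "('n::finite \<Rightarrow> 'a::finite) set"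
    and rv sv :: "('n \<Rightarrow> 'a) \<Rightarrow> complex^'d::finite"
    and u v :: "('n \<Rightarrow> 'a) \<Rightarrow> 'n \<Rightarrow> complex^'m::finite"
    and W eps :: real and x :: "'n \<Rightarrow> 'a"
  assumes unit_r: "\<forall>y\<in>XX. norm (rv y) = 1"
    and unit_s: "\<forall>y\<in>XX. norm (sv y) = 1"
    and W_def: "W = adv_star XX (gram XX rv) (gram XX sv)"
    and W_pos: "W > 0"
    and decomp: "\<forall>y\<in>XX. \<forall>z\<in>XX. gram XX rv $ y $ z - gram XX sv $ y $ z
                   = (\<Sum>i\<in>UNIV. Delta i $ y $ z * cinner (u y i) (v z i))"
    and u_bnd: "\<forall>y\<in>XX. (\<Sum>i\<in>UNIV. (norm (u y i))\<^sup>2) \<le> W"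
    and v_bnd: "\<forall>y\<in>XX. (\<Sum>i\<in>UNIV. (norm (v y i))\<^sup>2) \<le> W"
    and eps: "0 < eps" "eps \<le> 1"
    and x: "x \<in> XX"
  defines "P \<equiv> \<lambda>s. outer (psi_plus rv sv u W s eps x) (psi_plus rv sv u W s eps x)"
    and "X \<equiv> \<lambda>s. (pi / (2 * norm (Psi_plus rv sv u W s eps x))) *\<^sub>R
                   outer (Psi_minus rv sv v W s eps x) (psi_plus rv sv u W s eps x)"
    and "H \<equiv> \<lambda>s. H_x XX rv sv v W s eps x"
  shows "(\<forall>s\<in>{0..1}. H s ** X s - X s ** H s = H s ** X s
                  \<and> H s ** X s = vector_derivative P (at s) ** P s)
       \<and> (W \<ge> eps / 2 \<longrightarrow> (\<forall>s\<in>{0..1}.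
            opnorm (X s) \<le> pi * sqrt 5 / 2 * (W / eps)
          \<and> opnorm (vector_derivative X (at s) ** P s) \<le> pi\<^sup>2 / sqrt 2 * (W / eps)
          \<and> 2 * opnorm (X s) + opnorm (vector_derivative X (at s) ** P s) \<le> 15 * (W / eps)))"
proof -
  have unit: "norm (rv x) = 1" "norm (sv x) = 1" using unit_r unit_s x by auto
  note at_x = psi_plus_deriv norm_psi_plus cinner_k_minus_psi_plus norm_Psi_plus
    norm_Psi_minus_le norm_dPsi_minus_le
  note at_x = at_x[where rv = rv and sv = sv and x = x, OF unit]
  have orth: "\<forall>y\<in>XX. cinner (Psi_plus rv sv u W s eps x) (Psi_minus rv sv v W s eps y) = 0" for s
    using x decomp W_pos eps by (auto simp: gram_def intro!: cinner_Psi_plus_Psi_minus)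
  define c where "c = pi / (2 * N_plus u W eps x)"
  have c: "0 \<le> c" "c \<le> pi / 2"
    using N_plus_ge_1[of u W eps x] by (auto simp: c_def field_simps)
  have X_eq: "X = (\<lambda>s. outer (c *\<^sub>R Psi_minus rv sv v W s eps x) (psi_plus rv sv u W s eps x))"
    by (simp add: X_def c_def at_x(4) outer_scaleR_left)
  have core: "X s ** H s = 0" "H s ** X s = vector_derivative P (at s) ** P s"
      "vector_derivative X (at s) ** P s
         = outer (c *\<^sub>R dPsi_minus rv sv v W s eps x) (psi_plus rv sv u W s eps x)" for s
    using rank_one_adiabatic[OF at_x(1-3) Psi_minus_deriv psi_plus_perp_H_x[OF orth] H_x_Psi_minus[OF x]]
      eps unfolding X_eq P_def H_def c_def by auto
  have bounds: "opnorm (X s) \<le> pi / 2 * (sqrt 5 * (W / eps))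
      \<and> opnorm (vector_derivative X (at s) ** P s) \<le> pi / 2 * (sqrt 2 * pi * (W / eps))"
    if "eps / 2 \<le> W" for s
    unfolding core(3) unfolding X_eq using that eps v_bnd x c
    by (intro conjI opnorm_scaled_outer_le at_x) auto
  show ?thesis
  proof (intro conjI ballI impI)
    fix s
    show "H s ** X s - X s ** H s = H s ** X s" by (simp add: core(1))
    show "H s ** X s = vector_derivative P (at s) ** P s" by (rule core(2))
    assume "eps / 2 \<le> W"
    moreover have "0 \<le> W / eps" using W_pos eps by simp
    ultimately have "opnorm (X s) \<le> pi * sqrt 5 / 2 * (W / eps)
      \<and> opnorm (vector_derivative X (at s) ** P s) \<le> pi\<^sup>2 / sqrt 2 * (W / eps)
      \<and> 2 * opnorm (X s) + opnorm (vector_derivative X (at s) ** P s) \<le> 15 * (W / eps)"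
      using bounds[of s] by (intro bound_constants) blast+
    then show "opnorm (X s) \<le> pi * sqrt 5 / 2 * (W / eps)"
      and "opnorm (vector_derivative X (at s) ** P s) \<le> pi\<^sup>2 / sqrt 2 * (W / eps)"
      and "2 * opnorm (X s) + opnorm (vector_derivative X (at s) ** P s) \<le> 15 * (W / eps)"
      by blast+
  qed
qed

end
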